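(* Let $k$ be an algebraically closed field of characteristic $2$, $t$ transcendental over $k$, and $f(x)=a_2x^2+a_1x+a_0\in k[x]$ with $a_2a_1\neq0$. Then $\operatorname{Gal}(f^n(x)-t/k(t))\cong(C_2)^n$ for all $n\in\mathbb N$, where $C_2$ is the cyclic group of order $2$.
   Context: $f^n$ is $n$-fold composition; $\operatorname{Gal}(f^n(x)-t/k(t))$ is the Galois group of the splitting field of $f^n(x)-t$ over $k(t)$. *)

theory Defs
  imports "HOL-Algebra.Product_Groups" "HOL-Algebra.Elementary_Groups"
          "HOL-Computational_Algebra.Polynomial"
begin

text \<open>All fields live inside an ambient field of type 'b (type class field).\<close>

definition is_subfield :: "'b::field set \<Rightarrow> bool" where
  "is_subfield F \<longleftrightarrow> 0 \<in> F \<and> 1 \<in> F \<and>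
     (\<forall>x\<in>F. \<forall>y\<in>F. x + y \<in> F \<and> x * y \<in> F) \<and>
     (\<forall>x\<in>F. - x \<in> F \<and> inverse x \<in> F)"

text \<open>Subfield of the ambient field generated by a set S (e.g. k(t) = gen_field (insert t k)).\<close>
definition gen_field :: "'b::field set \<Rightarrow> 'b set" where
  "gen_field S = \<Inter>{F. is_subfield F \<and> S \<subseteq> F}"

definition poly_over :: "'b::field set \<Rightarrow> 'b poly \<Rightarrow> bool" where
  "poly_over k p \<longleftrightarrow> (\<forall>i. coeff p i \<in> k)"

definition alg_closed_subfield :: "'b::field set \<Rightarrow> bool" where
  "alg_closed_subfield k \<longleftrightarrow> is_subfield k \<and>
     (\<forall>p. poly_over k p \<and> degree p \<ge> 1 \<longrightarrow> (\<exists>x\<in>k. poly p x = 0))"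

definition transcendental_over :: "'b::field set \<Rightarrow> 'b \<Rightarrow> bool" where
  "transcendental_over k t \<longleftrightarrow> (\<forall>p. poly_over k p \<and> poly p t = 0 \<longrightarrow> p = 0)"

definition splits :: "'b::field poly \<Rightarrow> bool" where
  "splits p \<longleftrightarrow> (\<exists>c rs. p = smult c (\<Prod>r\<leftarrow>rs. [:- r, 1:]))"

definition poly_iter :: "'b::comm_ring_1 poly \<Rightarrow> nat \<Rightarrow> 'b poly" where
  "poly_iter f n = ((\<lambda>g. pcompose f g) ^^ n) [:0, 1:]"

text \<open>Splitting field of p over F inside the ambient field (assuming p splits there).\<close>
definition splitting_field :: "'b::field set \<Rightarrow> 'b poly \<Rightarrow> 'b set" where
  "splitting_field F p = gen_field (F \<union> {x. poly p x = 0})"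

definition field_auts_fixing :: "'b::field set \<Rightarrow> 'b set \<Rightarrow> ('b \<Rightarrow> 'b) set" where
  "field_auts_fixing L F = {\<sigma>. \<sigma> \<in> extensional L \<and> bij_betw \<sigma> L L \<and>
      (\<forall>x\<in>L. \<forall>y\<in>L. \<sigma> (x + y) = \<sigma> x + \<sigma> y \<and> \<sigma> (x * y) = \<sigma> x * \<sigma> y) \<and>
      (\<forall>x\<in>F. \<sigma> x = x)}"

text \<open>Automorphism group Aut(L/F), which is Gal(L/F) when L is a splitting field over F.\<close>
definition Gal_group :: "'b::field set \<Rightarrow> 'b set \<Rightarrow> ('b \<Rightarrow> 'b) monoid" where
  "Gal_group L F = \<lparr>carrier = field_auts_fixing L F,
                     monoid.mult = (\<lambda>\<sigma> \<tau>. compose L \<sigma> \<tau>),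
                     one = restrict id L\<rparr>"

definition C2_power :: "nat \<Rightarrow> (nat \<Rightarrow> int) monoid" where
  "C2_power n = product_group {..<n} (\<lambda>_. integer_mod_group 2)"

end

theory Submission
  imports Defs
begin

text \<open>
  In characteristic 2 we have f(x + d) = f(x) + L(d) with L(x) = a2 x^2 + a1 x additive, hence
  f^n(x + d) = f^n(x) + L^n(d). Fix a root r of f^n(x) - t. The roots are then exactly r + d with
  d in the group V = ker L^n of periods of f^n, which lies in k because k is algebraically closed; so the splitting
  field is k(r), and r is transcendental over k since t is. A k(t)-automorphism of k(r) is
  determined by the image of r, which must be a root r + d, and every translation r \<mapsto> r + d
  with d \<in> V does extend; translations compose additively, so the Galois group is V.
  Finally V \<cong> (C_2)^n: L^n has degree 2^n, so |V| \<le> 2^n, while a chain c_0, ..., c_{n-1} in k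
  with c_0 = a1/a2 (the nonzero root of L) and L(c_{j+1}) = c_j yields 2^n distinct sums in V.
\<close>

lemma subfield_0: "is_subfield F \<Longrightarrow> 0 \<in> F"
  by (simp add: is_subfield_def)

lemma subfield_1: "is_subfield F \<Longrightarrow> 1 \<in> F"
  by (simp add: is_subfield_def)

lemma subfield_add: "is_subfield F \<Longrightarrow> x \<in> F \<Longrightarrow> y \<in> F \<Longrightarrow> x + y \<in> F"
  by (simp add: is_subfield_def)

lemma subfield_mult: "is_subfield F \<Longrightarrow> x \<in> F \<Longrightarrow> y \<in> F \<Longrightarrow> x * y \<in> F"
  by (simp add: is_subfield_def)

lemma subfield_uminus: "is_subfield F \<Longrightarrow> x \<in> F \<Longrightarrow> - x \<in> F"
  by (simp add: is_subfield_def)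

lemma subfield_inverse: "is_subfield F \<Longrightarrow> x \<in> F \<Longrightarrow> inverse x \<in> F"
  by (simp add: is_subfield_def)

lemma subfield_diff: "is_subfield F \<Longrightarrow> x \<in> F \<Longrightarrow> y \<in> F \<Longrightarrow> x - y \<in> F"
  by (metis diff_conv_add_uminus subfield_add subfield_uminus)

lemma subfield_divide: "is_subfield F \<Longrightarrow> x \<in> F \<Longrightarrow> y \<in> F \<Longrightarrow> x / y \<in> F"
  by (metis divide_inverse subfield_inverse subfield_mult)

lemma gen_field_least: "is_subfield F \<Longrightarrow> S \<subseteq> F \<Longrightarrow> gen_field S \<subseteq> F"
  unfolding gen_field_def by blast

lemma gen_field_superset: "S \<subseteq> gen_field S"
  unfolding gen_field_def by blast

lemma is_subfield_gen_field: "is_subfield (gen_field S)"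
  unfolding gen_field_def is_subfield_def by blast

lemma poly_over_pCons: "poly_over k (pCons a p) \<longleftrightarrow> a \<in> k \<and> poly_over k p"
  unfolding poly_over_def by (metis coeff_pCons_0 coeff_pCons_Suc not0_implies_Suc)

lemma poly_over_0: "is_subfield k \<Longrightarrow> poly_over k 0"
  by (simp add: poly_over_def subfield_0)

lemma poly_over_const: "is_subfield k \<Longrightarrow> c \<in> k \<Longrightarrow> poly_over k [:c:]"
  by (simp add: poly_over_pCons poly_over_0)

lemma poly_over_1: "is_subfield k \<Longrightarrow> poly_over k 1"
  by (metis one_pCons poly_over_const subfield_1)

lemma poly_over_linear: "is_subfield k \<Longrightarrow> c \<in> k \<Longrightarrow> poly_over k [:c, 1:]"
  by (simp add: poly_over_pCons poly_over_0 subfield_1)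

lemma poly_over_add: "is_subfield k \<Longrightarrow> poly_over k p \<Longrightarrow> poly_over k q \<Longrightarrow> poly_over k (p + q)"
  by (simp add: poly_over_def subfield_add)

lemma poly_over_diff: "is_subfield k \<Longrightarrow> poly_over k p \<Longrightarrow> poly_over k q \<Longrightarrow> poly_over k (p - q)"
  by (simp add: poly_over_def subfield_diff)

lemma poly_over_smult: "is_subfield k \<Longrightarrow> a \<in> k \<Longrightarrow> poly_over k p \<Longrightarrow> poly_over k (smult a p)"
  by (simp add: poly_over_def subfield_mult)

lemma poly_over_mult: "is_subfield k \<Longrightarrow> poly_over k p \<Longrightarrow> poly_over k q \<Longrightarrow> poly_over k (p * q)"
  by (induct p) (simp_all add: poly_over_0 poly_over_pCons poly_over_add poly_over_smult subfield_0)

lemma poly_over_pcompose: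
  "is_subfield k \<Longrightarrow> poly_over k p \<Longrightarrow> poly_over k q \<Longrightarrow> poly_over k (pcompose p q)"
  by (induct p) (simp_all add: poly_over_0 pcompose_pCons poly_over_pCons poly_over_add
      poly_over_mult poly_over_const)

lemma poly_over_poly_iter: "is_subfield k \<Longrightarrow> poly_over k p \<Longrightarrow> poly_over k (poly_iter p n)"
  by (induct n) (simp_all add: poly_iter_def poly_over_linear subfield_0 poly_over_pcompose)

lemma poly_mem_subfield:
  "is_subfield F \<Longrightarrow> k \<subseteq> F \<Longrightarrow> poly_over k p \<Longrightarrow> x \<in> F \<Longrightarrow> poly p x \<in> F"
  by (induct p) (auto simp: poly_over_pCons subfield_0 intro!: subfield_add subfield_mult)

lemma poly_over_synthetic_div:
  "is_subfield k \<Longrightarrow> poly_over k p \<Longrightarrow> c \<in> k \<Longrightarrow> poly_over k (synthetic_div p c)"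
  by (induct p) (auto simp: poly_over_0 poly_over_pCons intro: poly_mem_subfield)

lemma poly_poly_iter: "poly (poly_iter p n) x = (poly p ^^ n) x"
  by (induct n arbitrary: x) (simp_all add: poly_iter_def poly_pcompose)

lemma degree_poly_iter: "degree (poly_iter (p :: 'b::field poly) n) = degree p ^ n"
  by (induct n) (simp_all add: poly_iter_def degree_pcompose)

lemma splits_has_root:
  assumes "splits p" "degree p > 0"
  obtains x where "poly p x = 0"
proof -
  obtain c rs where p: "p = smult c (\<Prod>r\<leftarrow>rs. [:- r, 1:])"
    using assms(1) unfolding splits_def by blast
  with assms(2) obtain x xs where "rs = x # xs"
    by (cases rs) auto
  with p have "poly p x = 0"
    by simp
  then show thesis ..
qed

section \<open>Algebraic closedness and transcendence\<close>

lemma alg_closed_subfield_root_mem: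
  assumes "alg_closed_subfield k" "poly_over k p" "p \<noteq> 0" "poly p y = 0"
  shows "y \<in> k"
  using assms(2-4)
proof (induction "degree p" arbitrary: p rule: less_induct)
  case less
  have k: "is_subfield k"
    using assms(1) alg_closed_subfield_def by blast
  show ?case
  proof (cases "degree p = 0")
    case True
    then obtain c where "p = [:c:]"
      by (metis degree_eq_zeroE)
    with less.prems show ?thesis
      by simp
  next
    case False
    then obtain x where x: "x \<in> k" "poly p x = 0"
      using assms(1) less.prems unfolding alg_closed_subfield_def by auto
    define q where "q = synthetic_div p x"
    have p: "p = [:-x, 1:] * q"
      using synthetic_div_correct'[of x p] x by (simp add: q_def)
    have "poly_over k q" "degree q < degree p"
      using poly_over_synthetic_div[OF k less.prems(1) x(1)] False
      by (simp_all add: q_def degree_synthetic_div)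
    moreover have "q \<noteq> 0"
      using p less.prems(2) by auto
    moreover have "y = x \<or> poly q y = 0"
      using less.prems(3) p by (simp del: mult_pCons_left)
    ultimately show ?thesis
      using less.hyps x(1) by blast
  qed
qed

lemma transcendental_over_notin:
  assumes "is_subfield k" "transcendental_over k t"
  shows "t \<notin> k"
proof
  assume "t \<in> k"
  then have "poly_over k [:- t, 1:]"
    using assms(1) by (simp add: poly_over_linear subfield_uminus)
  moreover have "poly [:- t, 1:] t = 0"
    by simp
  ultimately show False
    using assms(2) unfolding transcendental_over_def by fastforce
qed

lemma transcendental_over_poly_preimage:
  assumes k: "alg_closed_subfield k" and P: "poly_over k P"
    and t: "transcendental_over k (poly P y)"
  shows "transcendental_over k y"
  unfolding transcendental_over_def
proof (intro allI impI)
  fix p assume p: "poly_over k p \<and> poly p y = 0"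
  have "is_subfield k"
    using k alg_closed_subfield_def by blast
  show "p = 0"
  proof (rule ccontr)
    assume "p \<noteq> 0"
    with k p have "y \<in> k"
      using alg_closed_subfield_root_mem by blast
    with P \<open>is_subfield k\<close> have "poly P y \<in> k"
      using poly_mem_subfield by blast
    with t \<open>is_subfield k\<close> show False
      using transcendental_over_notin by blast
  qed
qed

lemma transcendental_over_add:
  assumes k: "is_subfield k" and d: "d \<in> k" and r: "transcendental_over k r"
  shows "transcendental_over k (r + d)"
  unfolding transcendental_over_def
proof (intro allI impI)
  fix p assume p: "poly_over k p \<and> poly p (r + d) = 0"
  then have "poly (pcompose p [:d, 1:]) r = 0"
    by (simp add: poly_pcompose add.commute)
  moreover have "poly_over k (pcompose p [:d, 1:])"
    using p k d by (simp add: poly_over_pcompose poly_over_linear)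
  ultimately have "pcompose p [:d, 1:] = 0"
    using r unfolding transcendental_over_def by blast
  then show "p = 0"
    by (rule pcompose_eq_0) simp
qed

section \<open>Field homomorphisms\<close>

definition field_hom_on :: "'b::field set \<Rightarrow> ('b \<Rightarrow> 'b) \<Rightarrow> bool" where
  "field_hom_on L s \<longleftrightarrow>
     (\<forall>x\<in>L. \<forall>y\<in>L. s (x + y) = s x + s y \<and> s (x * y) = s x * s y) \<and> s 1 = 1"

lemma field_hom_on_add: "field_hom_on L s \<Longrightarrow> x \<in> L \<Longrightarrow> y \<in> L \<Longrightarrow> s (x + y) = s x + s y"
  by (simp add: field_hom_on_def)

lemma field_hom_on_mult: "field_hom_on L s \<Longrightarrow> x \<in> L \<Longrightarrow> y \<in> L \<Longrightarrow> s (x * y) = s x * s y"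
  by (simp add: field_hom_on_def)

lemma field_hom_on_1: "field_hom_on L s \<Longrightarrow> s 1 = 1"
  by (simp add: field_hom_on_def)

lemma field_hom_on_0:
  assumes "is_subfield L" "field_hom_on L s"
  shows "s 0 = 0"
proof -
  have "s (0 + 0) = s 0 + s 0"
    using field_hom_on_add[OF assms(2)] subfield_0[OF assms(1)] by blast
  then show ?thesis
    by (metis add.right_neutral add_left_cancel)
qed

lemma field_hom_on_uminus:
  assumes "is_subfield L" "field_hom_on L s" "x \<in> L"
  shows "s (- x) = - s x"
proof -
  have "s x + s (- x) = 0"
    using field_hom_on_add[of L s x "- x"] field_hom_on_0 subfield_uminus assms by fastforce
  then show ?thesis
    by (simp add: eq_neg_iff_add_eq_0 add.commute)
qed

lemma field_hom_on_inverse: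
  assumes "is_subfield L" "field_hom_on L s" "x \<in> L"
  shows "s (inverse x) = inverse (s x)"
proof (cases "x = 0")
  case True
  then show ?thesis
    using field_hom_on_0 assms by fastforce
next
  case False
  then have "s x * s (inverse x) = 1"
    using field_hom_on_mult[of L s x "inverse x"] field_hom_on_1 subfield_inverse assms by fastforce
  then show ?thesis
    by (metis inverse_unique)
qed

lemma field_hom_on_poly:
  assumes L: "is_subfield L" "k \<subseteq> L" and s: "field_hom_on L s" "\<forall>c\<in>k. s c = c"
    and p: "poly_over k p" and x: "x \<in> L"
  shows "s (poly p x) = poly p (s x)"
  using p
proof (induct p)
  case 0
  then show ?case
    using field_hom_on_0[OF L(1) s(1)] by simp
next
  case (pCons a p)
  then have a: "a \<in> k" "poly_over k p"
    by (simp_all add: poly_over_pCons)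
  have px: "poly p x \<in> L"
    using poly_mem_subfield[OF L a(2) x] .
  have "s (poly (pCons a p) x) = s a + s (x * poly p x)"
    using field_hom_on_add[OF s(1)] L a(1) x px by (simp add: subfield_mult subset_iff)
  also have "\<dots> = a + s x * poly p (s x)"
    using field_hom_on_mult[OF s(1) x px] pCons.hyps a s(2) by simp
  finally show ?case
    by simp
qed

lemma subfield_equalizer:
  assumes L: "is_subfield L" and s: "field_hom_on L s" and u: "field_hom_on L u"
  shows "is_subfield {x\<in>L. s x = u x}"
  unfolding is_subfield_def
  using L field_hom_on_0[OF L s] field_hom_on_0[OF L u] field_hom_on_1[OF s] field_hom_on_1[OF u]
    field_hom_on_add[OF s] field_hom_on_add[OF u] field_hom_on_mult[OF s] field_hom_on_mult[OF u]
    field_hom_on_uminus[OF L s] field_hom_on_uminus[OF L u]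
    field_hom_on_inverse[OF L s] field_hom_on_inverse[OF L u]
  by (simp add: subfield_0 subfield_1 subfield_add subfield_mult subfield_uminus subfield_inverse)

lemma field_hom_on_eq_on_gen_field:
  assumes "is_subfield L" "field_hom_on L s" "field_hom_on L u" "S \<subseteq> L" "\<forall>x\<in>S. s x = u x"
    and "x \<in> gen_field S"
  shows "s x = u x"
  using gen_field_least[OF subfield_equalizer[OF assms(1-3)], of S] assms(4-6) by blast

lemma field_auts_fixing_hom:
  "\<sigma> \<in> field_auts_fixing L F \<Longrightarrow> 1 \<in> F \<Longrightarrow> field_hom_on L \<sigma>"
  unfolding field_auts_fixing_def field_hom_on_def by blast

section \<open>Simple transcendental extensions\<close>

definition rat_fun_field :: "'b::field set \<Rightarrow> 'b \<Rightarrow> 'b set" where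
  "rat_fun_field k r = {poly p r / poly q r | p q. poly_over k p \<and> poly_over k q \<and> q \<noteq> 0}"

lemma rat_fun_fieldI:
  "poly_over k p \<Longrightarrow> poly_over k q \<Longrightarrow> q \<noteq> 0 \<Longrightarrow> poly p r / poly q r \<in> rat_fun_field k r"
  unfolding rat_fun_field_def by blast

lemma rat_fun_fieldE:
  assumes "x \<in> rat_fun_field k r"
  obtains p q where "poly_over k p" "poly_over k q" "q \<noteq> 0" "x = poly p r / poly q r"
  using assms unfolding rat_fun_field_def by blast

lemma transcendental_poly_nonzero:
  "transcendental_over k r \<Longrightarrow> poly_over k q \<Longrightarrow> q \<noteq> 0 \<Longrightarrow> poly q r \<noteq> 0"
  unfolding transcendental_over_def by blast

lemma poly_mem_rat_fun_field: "is_subfield k \<Longrightarrow> poly_over k p \<Longrightarrow> poly p r \<in> rat_fun_field k r"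
  using rat_fun_fieldI[of k p 1 r] poly_over_1[of k] by simp

lemma subset_rat_fun_field: "is_subfield k \<Longrightarrow> k \<subseteq> rat_fun_field k r"
  using poly_mem_rat_fun_field[of k "[:c:]" r for c] poly_over_const by fastforce

lemma generator_mem_rat_fun_field: "is_subfield k \<Longrightarrow> r \<in> rat_fun_field k r"
  using poly_mem_rat_fun_field[of k "[:0, 1:]" r] poly_over_linear subfield_0 by fastforce

lemma rat_fun_field_least:
  assumes F: "is_subfield F" "k \<subseteq> F" "r \<in> F"
  shows "rat_fun_field k r \<subseteq> F"
proof
  fix x assume "x \<in> rat_fun_field k r"
  then obtain p q where "poly_over k p" "poly_over k q" "x = poly p r / poly q r"
    by (rule rat_fun_fieldE)
  then show "x \<in> F"
    using F poly_mem_subfield subfield_divide by metis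
qed

lemma is_subfield_rat_fun_field:
  assumes k: "is_subfield k" and r: "transcendental_over k r"
  shows "is_subfield (rat_fun_field k r)"
  unfolding is_subfield_def
proof (intro conjI ballI)
  show "0 \<in> rat_fun_field k r" "1 \<in> rat_fun_field k r"
    using subset_rat_fun_field[OF k] subfield_0[OF k] subfield_1[OF k] by blast+
  fix x y assume "x \<in> rat_fun_field k r" "y \<in> rat_fun_field k r"
  then obtain p q p' q' where x: "poly_over k p" "poly_over k q" "q \<noteq> 0" "x = poly p r / poly q r"
    and y: "poly_over k p'" "poly_over k q'" "q' \<noteq> 0" "y = poly p' r / poly q' r"
    by (metis rat_fun_fieldE)
  have nz: "poly q r \<noteq> 0" "poly q' r \<noteq> 0"
    using transcendental_poly_nonzero[OF r] x y by auto
  have "x + y = poly (p * q' + p' * q) r / poly (q * q') r"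
    by (simp only: x(4) y(4) add_frac_eq[OF nz] poly_add poly_mult)
  then show "x + y \<in> rat_fun_field k r"
    using x y k by (metis rat_fun_fieldI poly_over_add poly_over_mult mult_eq_0_iff)
  have "x * y = poly (p * p') r / poly (q * q') r"
    by (simp only: x(4) y(4) times_divide_times_eq poly_mult)
  then show "x * y \<in> rat_fun_field k r"
    using x y k by (metis rat_fun_fieldI poly_over_mult mult_eq_0_iff)
next
  fix x assume "x \<in> rat_fun_field k r"
  then obtain p q where x: "poly_over k p" "poly_over k q" "q \<noteq> 0" "x = poly p r / poly q r"
    by (rule rat_fun_fieldE)
  have "- x = poly (0 - p) r / poly q r"
    by (simp add: x(4))
  then show "- x \<in> rat_fun_field k r"
    using x k by (metis rat_fun_fieldI poly_over_diff poly_over_0)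
  show "inverse x \<in> rat_fun_field k r"
  proof (cases "p = 0")
    case True
    then show ?thesis
      using x(4) subset_rat_fun_field[OF k] subfield_0[OF k] by auto
  next
    case False
    then show ?thesis
      using x rat_fun_fieldI[of k q p r] by simp
  qed
qed

lemma rat_fun_field_hom_eqI:
  assumes k: "is_subfield k" and r: "transcendental_over k r"
    and s: "field_hom_on (rat_fun_field k r) s" and u: "field_hom_on (rat_fun_field k r) u"
    and "\<forall>c\<in>k. s c = u c" "s r = u r" and x: "x \<in> rat_fun_field k r"
  shows "s x = u x"
proof -
  have "rat_fun_field k r \<subseteq> {x \<in> rat_fun_field k r. s x = u x}"
    using subfield_equalizer[OF is_subfield_rat_fun_field[OF k r] s u] assms(5,6)
      subset_rat_fun_field[OF k] generator_mem_rat_fun_field[OF k]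
    by (intro rat_fun_field_least) auto
  then show ?thesis
    using x by blast
qed

text \<open>
  Substituting another transcendental s for r is well defined on k(r) because a polynomial
  relation over k between values at r is the zero polynomial, hence also holds at s.
\<close>

definition rat_fun_subst :: "'b::field set \<Rightarrow> 'b \<Rightarrow> 'b \<Rightarrow> 'b \<Rightarrow> 'b" where
  "rat_fun_subst k r s = restrict (\<lambda>x. SOME y. \<exists>p q. poly_over k p \<and> poly_over k q \<and> q \<noteq> 0 \<and>
      x = poly p r / poly q r \<and> y = poly p s / poly q s) (rat_fun_field k r)"

context
  fixes k :: "'b::field set" and r s :: 'b
  assumes k: "is_subfield k"
    and r: "transcendental_over k r" and s: "transcendental_over k s"
begin

lemma rat_fun_frac_eq_transfer:
  assumes p: "poly_over k p" "poly_over k q" "q \<noteq> 0"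
    and p': "poly_over k p'" "poly_over k q'" "q' \<noteq> 0"
    and eq: "poly p r / poly q r = poly p' r / poly q' r"
  shows "poly p s / poly q s = poly p' s / poly q' s"
proof -
  have "poly (p * q' - p' * q) r = 0"
    using eq transcendental_poly_nonzero[OF r] p p' by (simp add: frac_eq_eq)
  moreover have "poly_over k (p * q' - p' * q)"
    using p p' k by (simp add: poly_over_diff poly_over_mult)
  ultimately have "p * q' = p' * q"
    using r unfolding transcendental_over_def by (metis right_minus_eq)
  then have "poly p s * poly q' s = poly p' s * poly q s"
    by (metis poly_mult)
  then show ?thesis
    using transcendental_poly_nonzero[OF s] p p' by (simp add: frac_eq_eq)
qed

lemma rat_fun_subst_eval:
  assumes p: "poly_over k p" "poly_over k q" "q \<noteq> 0"
  shows "rat_fun_subst k r s (poly p r / poly q r) = poly p s / poly q s"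
proof -
  let ?P = "\<lambda>y. \<exists>p' q'. poly_over k p' \<and> poly_over k q' \<and> q' \<noteq> 0 \<and>
    poly p r / poly q r = poly p' r / poly q' r \<and> y = poly p' s / poly q' s"
  have "?P (poly p s / poly q s)"
    using p by blast
  then have "?P (SOME y. ?P y)"
    by (rule someI)
  then have "(SOME y. ?P y) = poly p s / poly q s"
    using rat_fun_frac_eq_transfer[OF p] by metis
  moreover have "poly p r / poly q r \<in> rat_fun_field k r"
    using rat_fun_fieldI p by blast
  ultimately show ?thesis
    unfolding rat_fun_subst_def by simp
qed

lemma rat_fun_subst_const: "c \<in> k \<Longrightarrow> rat_fun_subst k r s c = c"
  using rat_fun_subst_eval[of "[:c:]" 1] poly_over_const[OF k] poly_over_1[OF k] by simp

lemma rat_fun_subst_generator: "rat_fun_subst k r s r = s"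
  using rat_fun_subst_eval[of "[:0, 1:]" 1] poly_over_linear[OF k] subfield_0[OF k]
    poly_over_1[OF k] by simp

lemma field_hom_on_rat_fun_subst: "field_hom_on (rat_fun_field k r) (rat_fun_subst k r s)"
  unfolding field_hom_on_def
proof (intro conjI ballI)
  show "rat_fun_subst k r s 1 = 1"
    using rat_fun_subst_const subfield_1[OF k] by blast
  fix x y assume "x \<in> rat_fun_field k r" "y \<in> rat_fun_field k r"
  then obtain p q p' q' where x: "poly_over k p" "poly_over k q" "q \<noteq> 0" "x = poly p r / poly q r"
    and y: "poly_over k p'" "poly_over k q'" "q' \<noteq> 0" "y = poly p' r / poly q' r"
    by (metis rat_fun_fieldE)
  have nz: "poly q r \<noteq> 0" "poly q' r \<noteq> 0" "poly q s \<noteq> 0" "poly q' s \<noteq> 0"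
    using transcendental_poly_nonzero[OF r] transcendental_poly_nonzero[OF s] x y by auto
  have o: "poly_over k (p * q' + p' * q)" "poly_over k (q * q')" "q * q' \<noteq> 0" "poly_over k (p * p')"
    using x y k by (auto intro: poly_over_add poly_over_mult)
  have "x + y = poly (p * q' + p' * q) r / poly (q * q') r"
    by (simp only: x(4) y(4) add_frac_eq[OF nz(1,2)] poly_add poly_mult)
  then have "rat_fun_subst k r s (x + y) = poly (p * q' + p' * q) s / poly (q * q') s"
    by (simp only: rat_fun_subst_eval[OF o(1-3)])
  also have "\<dots> = rat_fun_subst k r s x + rat_fun_subst k r s y"
    by (simp only: x(4) y(4) rat_fun_subst_eval[OF x(1-3)] rat_fun_subst_eval[OF y(1-3)]
        add_frac_eq[OF nz(3,4)] poly_add poly_mult)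
  finally show "rat_fun_subst k r s (x + y) = rat_fun_subst k r s x + rat_fun_subst k r s y" .
  have "x * y = poly (p * p') r / poly (q * q') r"
    by (simp only: x(4) y(4) times_divide_times_eq poly_mult)
  then have "rat_fun_subst k r s (x * y) = poly (p * p') s / poly (q * q') s"
    by (simp only: rat_fun_subst_eval[OF o(4,2,3)])
  also have "\<dots> = rat_fun_subst k r s x * rat_fun_subst k r s y"
    by (simp only: x(4) y(4) rat_fun_subst_eval[OF x(1-3)] rat_fun_subst_eval[OF y(1-3)]
        times_divide_times_eq poly_mult)
  finally show "rat_fun_subst k r s (x * y) = rat_fun_subst k r s x * rat_fun_subst k r s y" .
qed

end

definition rat_fun_shift :: "'b::field set \<Rightarrow> 'b \<Rightarrow> 'b \<Rightarrow> 'b \<Rightarrow> 'b" where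
  "rat_fun_shift k r d = rat_fun_subst k r (r + d)"

context
  fixes k :: "'b::field set" and r :: 'b
  assumes k: "is_subfield k" and r: "transcendental_over k r"
begin

lemma rat_fun_shift_eval:
  assumes "d \<in> k" "poly_over k p" "poly_over k q" "q \<noteq> 0"
  shows "rat_fun_shift k r d (poly p r / poly q r) = poly p (r + d) / poly q (r + d)"
  unfolding rat_fun_shift_def
  using rat_fun_subst_eval[OF k r transcendental_over_add[OF k _ r]] assms by blast

lemma rat_fun_shift_eval_pcompose:
  assumes d: "d \<in> k" and p: "poly_over k p" "poly_over k q" "q \<noteq> 0"
  shows "rat_fun_shift k r d (poly p r / poly q r) =
           poly (pcompose p [:d, 1:]) r / poly (pcompose q [:d, 1:]) r"
    and "poly_over k (pcompose p [:d, 1:])" "poly_over k (pcompose q [:d, 1:])"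
    and "pcompose q [:d, 1:] \<noteq> 0"
proof -
  show "rat_fun_shift k r d (poly p r / poly q r) =
          poly (pcompose p [:d, 1:]) r / poly (pcompose q [:d, 1:]) r"
    using rat_fun_shift_eval[OF d p] by (simp add: poly_pcompose add.commute)
  show "poly_over k (pcompose p [:d, 1:])" "poly_over k (pcompose q [:d, 1:])"
    using p d k by (simp_all add: poly_over_pcompose poly_over_linear)
  show "pcompose q [:d, 1:] \<noteq> 0"
    using p(3) pcompose_eq_0[of q "[:d, 1:]"] by auto
qed

lemma rat_fun_shift_mem: "d \<in> k \<Longrightarrow> x \<in> rat_fun_field k r \<Longrightarrow> rat_fun_shift k r d x \<in> rat_fun_field k r"
  by (erule rat_fun_fieldE) (metis rat_fun_fieldI rat_fun_shift_eval_pcompose)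

lemma rat_fun_shift_add:
  assumes d: "d \<in> k" and e: "e \<in> k" and x: "x \<in> rat_fun_field k r"
  shows "rat_fun_shift k r d (rat_fun_shift k r e x) = rat_fun_shift k r (d + e) x"
proof -
  obtain p q where p: "poly_over k p" "poly_over k q" "q \<noteq> 0" and x: "x = poly p r / poly q r"
    using x by (rule rat_fun_fieldE)
  note pe = rat_fun_shift_eval_pcompose[OF e p]
  have "rat_fun_shift k r d (rat_fun_shift k r e x) =
          poly (pcompose p [:e, 1:]) (r + d) / poly (pcompose q [:e, 1:]) (r + d)"
    using x pe rat_fun_shift_eval[OF d pe(2-4)] by simp
  also have "\<dots> = poly p (r + (d + e)) / poly q (r + (d + e))"
    by (simp add: poly_pcompose algebra_simps)
  also have "\<dots> = rat_fun_shift k r (d + e) x"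
    using rat_fun_shift_eval[OF subfield_add[OF k d e] p] x by simp
  finally show ?thesis .
qed

lemma rat_fun_shift_0: "x \<in> rat_fun_field k r \<Longrightarrow> rat_fun_shift k r 0 x = x"
  by (erule rat_fun_fieldE) (simp add: rat_fun_shift_eval subfield_0[OF k])

lemma rat_fun_shift_generator: "d \<in> k \<Longrightarrow> rat_fun_shift k r d r = r + d"
  unfolding rat_fun_shift_def
  using rat_fun_subst_generator[OF k r transcendental_over_add[OF k _ r]] by blast

lemma rat_fun_shift_aut: "d \<in> k \<Longrightarrow> rat_fun_shift k r d \<in> field_auts_fixing (rat_fun_field k r) k"
  unfolding field_auts_fixing_def
proof (intro CollectI conjI)
  assume d: "d \<in> k"
  then have "-d \<in> k"
    using k subfield_uminus by blast
  then show "bij_betw (rat_fun_shift k r d) (rat_fun_field k r) (rat_fun_field k r)"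
    using d rat_fun_shift_add rat_fun_shift_0 rat_fun_shift_mem
    by (intro bij_betw_byWitness[where f' = "rat_fun_shift k r (- d)"]) auto
  show "rat_fun_shift k r d \<in> extensional (rat_fun_field k r)"
    by (simp add: rat_fun_shift_def rat_fun_subst_def)
  show "\<forall>x\<in>rat_fun_field k r. \<forall>y\<in>rat_fun_field k r.
          rat_fun_shift k r d (x + y) = rat_fun_shift k r d x + rat_fun_shift k r d y \<and>
          rat_fun_shift k r d (x * y) = rat_fun_shift k r d x * rat_fun_shift k r d y"
    using field_hom_on_rat_fun_subst[OF k r transcendental_over_add[OF k d r]]
    unfolding field_hom_on_def rat_fun_shift_def by blast
  show "\<forall>x\<in>k. rat_fun_shift k r d x = x"
    using rat_fun_subst_const[OF k r transcendental_over_add[OF k d r]]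
    unfolding rat_fun_shift_def by blast
qed

end

section \<open>Characteristic 2\<close>

lemma char2_add_self: "CHAR('b::field) = 2 \<Longrightarrow> (x::'b) + x = 0"
  by (metis mult_2 mult_zero_left of_nat_CHAR of_nat_numeral)

lemma char2_of_int_mod2:
  assumes "CHAR('b::field) = 2"
  shows "(of_int (x mod 2) :: 'b) = of_int x"
proof -
  have "(of_int x :: 'b) = of_int (x div 2) * (1 + 1) + of_int (x mod 2)"
    by (metis mult.commute mult_div_mod_eq of_int_add of_int_mult one_add_one of_int_numeral)
  then show ?thesis
    using char2_add_self[OF assms, of 1] by simp
qed

lemma char2_quadratic_shift:
  assumes "CHAR('b::field) = 2"
  shows "poly [:u, v, w:] ((x::'b) + d) = poly [:u, v, w:] x + poly [:0, v, w:] d"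
proof -
  have "poly [:u, v, w:] (x + d) = poly [:u, v, w:] x + poly [:0, v, w:] d + (x*d*w + x*d*w)"
    by (simp add: algebra_simps)
  then show ?thesis
    using char2_add_self[OF assms] by simp
qed

lemma char2_quadratic_iter_shift:
  assumes "CHAR('b::field) = 2"
  shows "(poly [:u, v, w:] ^^ n) ((x::'b) + d) = (poly [:u, v, w:] ^^ n) x + (poly [:0, v, w:] ^^ n) d"
  by (induct n) (simp_all only: funpow.simps o_apply id_apply char2_quadratic_shift[OF assms])

section \<open>The group (C_2)^n\<close>

lemma carrier_C2_power: "carrier (C2_power n) = (\<Pi>\<^sub>E j\<in>{..<n}. {0..<2})"
  by (simp add: C2_power_def carrier_integer_mod_group)

lemma C2_power_mult: "e \<otimes>\<^bsub>C2_power n\<^esub> e' = (\<lambda>j\<in>{..<n}. (e j + e' j) mod 2)"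
  by (simp add: C2_power_def)

lemma group_C2_power: "group (C2_power n)"
  unfolding C2_power_def by (rule product_group) simp

lemma C2_power_mem: "e \<in> carrier (C2_power n) \<Longrightarrow> j < n \<Longrightarrow> e j = 0 \<or> e j = 1"
proof -
  assume "e \<in> carrier (C2_power n)" "j < n"
  then have "e j \<in> {0..<2}"
    unfolding carrier_C2_power by (simp add: PiE_iff)
  then show ?thesis
    by auto
qed

lemma C2_power_eqI:
  assumes "e \<in> carrier (C2_power n)" "e' \<in> carrier (C2_power n)"
    and "\<And>j. j < n \<Longrightarrow> (e \<otimes>\<^bsub>C2_power n\<^esub> e') j = 0"
  shows "e = e'"
proof (rule PiE_ext)
  show "e \<in> (\<Pi>\<^sub>E j\<in>{..<n}. {0..<2})" "e' \<in> (\<Pi>\<^sub>E j\<in>{..<n}. {0..<2})"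
    using assms(1,2) by (simp_all add: carrier_C2_power)
  fix j assume "j \<in> {..<n}"
  then show "e j = e' j"
    using C2_power_mem[OF assms(1), of j] C2_power_mem[OF assms(2), of j] assms(3)[of j]
    by (auto simp: C2_power_mult)
qed

section \<open>The Galois group of f^n(x) - t\<close>

locale char2_iterated_quadratic =
  fixes k :: "'b::field set" and t a0 a1 a2 :: 'b and n :: nat and r :: 'b
  assumes char: "CHAR('b) = 2" and alg_closed: "alg_closed_subfield k"
    and transcendental: "transcendental_over k t"
    and coeffs: "a0 \<in> k" "a1 \<in> k" "a2 \<in> k" and coeffs_nonzero: "a2 * a1 \<noteq> 0"
    and root: "poly (poly_iter [:a0, a1, a2:] n) r = t"
begin

abbreviation "F \<equiv> poly_iter [:a0, a1, a2:] n"
definition L :: "'b \<Rightarrow> 'b" where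
  "L = poly [:0, a1, a2:]"

abbreviation "L_iter \<equiv> poly_iter [:0, a1, a2:] n"

definition periods :: "'b set" where
  "periods = {d. (L ^^ n) d = 0}"

lemma is_subfield_k: "is_subfield k"
  using alg_closed alg_closed_subfield_def by blast

lemma a2_nonzero: "a2 \<noteq> 0" and a1_nonzero: "a1 \<noteq> 0"
  using coeffs_nonzero by auto

lemma iter_L_add: "(L ^^ m) (x + y) = (L ^^ m) x + (L ^^ m) y"
  using char2_quadratic_iter_shift[OF char, where u = 0 and v = a1 and w = a2] by (simp only: L_def add_0_left)

lemma iter_L_0: "(L ^^ m) 0 = 0"
  using iter_L_add[of m 0 0] by (metis add.right_neutral add_left_cancel)

lemma iter_L_sum: "finite S \<Longrightarrow> (L ^^ m) (\<Sum>j\<in>S. g j) = (\<Sum>j\<in>S. (L ^^ m) (g j))"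
  by (induct S rule: finite_induct) (simp_all add: iter_L_0 iter_L_add)

lemma poly_F_add: "poly F (x + d) = poly F x + (L ^^ n) d"
  by (simp only: poly_poly_iter char2_quadratic_iter_shift[OF char] L_def)

lemma poly_over_F: "poly_over k F"
  using is_subfield_k coeffs
  by (intro poly_over_poly_iter) (simp_all add: poly_over_pCons poly_over_0)

lemma poly_over_iter_L: "poly_over k (L_iter)"
  using is_subfield_k coeffs
  by (intro poly_over_poly_iter) (simp_all add: poly_over_pCons poly_over_0 subfield_0)

lemma degree_iter_L: "degree (L_iter) = 2 ^ n"
  using a2_nonzero by (simp add: degree_poly_iter numeral_2_eq_2)

lemma periods_eq_roots: "periods = {d. poly (L_iter) d = 0}"
  by (simp add: periods_def poly_poly_iter L_def)

lemma L_iter_nonzero: "L_iter \<noteq> 0"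
  using degree_iter_L by (metis degree_0 power_not_zero zero_neq_numeral)

lemma finite_periods: "finite periods"
  unfolding periods_eq_roots by (rule poly_roots_finite[OF L_iter_nonzero])

lemma card_periods_le: "card periods \<le> 2 ^ n"
  unfolding periods_eq_roots using card_poly_roots_bound[OF L_iter_nonzero] degree_iter_L by simp

lemma periods_subset: "periods \<subseteq> k"
proof
  fix d assume "d \<in> periods"
  then have "poly (L_iter) d = 0"
    by (simp add: periods_eq_roots)
  then show "d \<in> k"
    using alg_closed_subfield_root_mem[OF alg_closed poly_over_iter_L L_iter_nonzero] by blast
qed

lemma zero_mem_periods: "0 \<in> periods"
  by (simp add: periods_def iter_L_0)

lemma periods_add: "d \<in> periods \<Longrightarrow> e \<in> periods \<Longrightarrow> d + e \<in> periods"
  by (simp add: periods_def iter_L_add)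

lemma periods_sum: "finite S \<Longrightarrow> (\<And>j. j \<in> S \<Longrightarrow> g j \<in> periods) \<Longrightarrow> (\<Sum>j\<in>S. g j) \<in> periods"
  by (induct S rule: finite_induct) (auto intro: zero_mem_periods periods_add)

lemma root_iff_mem_periods: "poly F x = t \<longleftrightarrow> x - r \<in> periods"
  using poly_F_add[of r "x - r"] root by (simp add: periods_def)

lemma transcendental_root: "transcendental_over k r"
  using transcendental_over_poly_preimage[OF alg_closed poly_over_F] transcendental root by simp

abbreviation "kt \<equiv> gen_field (insert t k)"

abbreviation "kr \<equiv> rat_fun_field k r"

lemma is_subfield_kr: "is_subfield kr"
  by (rule is_subfield_rat_fun_field[OF is_subfield_k transcendental_root])

lemma kt_subset_kr: "kt \<subseteq> kr"
proof (rule gen_field_least[OF is_subfield_kr])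
  show "insert t k \<subseteq> kr"
    using root poly_mem_rat_fun_field[OF is_subfield_k poly_over_F] subset_rat_fun_field[OF is_subfield_k]
    by blast
qed

lemma splitting_field_eq: "splitting_field kt (F - [:t:]) = kr"
proof
  let ?R = "{x. poly (F - [:t:]) x = 0}"
  have R: "?R = {x. x - r \<in> periods}"
    using root_iff_mem_periods by auto
  have "?R \<subseteq> kr"
  proof
    fix x assume "x \<in> ?R"
    then have "x - r \<in> k"
      using R periods_subset by blast
    then have "r + (x - r) \<in> kr"
      using subfield_add[OF is_subfield_kr generator_mem_rat_fun_field[OF is_subfield_k]]
        subset_rat_fun_field[OF is_subfield_k] by blast
    then show "x \<in> kr"
      by simp
  qed
  then show "splitting_field kt (F - [:t:]) \<subseteq> kr"
    unfolding splitting_field_def using kt_subset_kr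
    by (intro gen_field_least[OF is_subfield_kr]) blast
  have "k \<subseteq> kt" "r \<in> ?R"
    using gen_field_superset[of "insert t k"] R zero_mem_periods by auto
  then show "kr \<subseteq> splitting_field kt (F - [:t:])"
    unfolding splitting_field_def using gen_field_superset[of "kt \<union> ?R"]
    by (intro rat_fun_field_least[OF is_subfield_gen_field]) blast+
qed

abbreviation "shift \<equiv> rat_fun_shift k r"

lemma shift_fixes_kt:
  assumes d: "d \<in> periods" and x: "x \<in> kt"
  shows "shift d x = x"
proof (rule field_hom_on_eq_on_gen_field[OF is_subfield_kr _ _ _ _ x])
  have dk: "d \<in> k"
    using d periods_subset by blast
  show "field_hom_on kr (shift d)"
    using rat_fun_shift_aut[OF is_subfield_k transcendental_root dk] subfield_1[OF is_subfield_k]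
    by (rule field_auts_fixing_hom)
  show "field_hom_on kr (\<lambda>x. x)"
    by (simp add: field_hom_on_def)
  show "insert t k \<subseteq> kr"
    using kt_subset_kr gen_field_superset by blast
  have "shift d t = poly F (r + d)"
    using rat_fun_shift_eval[OF is_subfield_k transcendental_root dk poly_over_F poly_over_1[OF is_subfield_k]]
      root by simp
  also have "\<dots> = t"
    using d root_iff_mem_periods by simp
  finally show "\<forall>x\<in>insert t k. shift d x = x"
    using rat_fun_shift_aut[OF is_subfield_k transcendental_root dk]
    by (simp add: field_auts_fixing_def)
qed

lemma Gal_carrier_eq: "field_auts_fixing kr kt = shift ` periods"
proof
  show "shift ` periods \<subseteq> field_auts_fixing kr kt"
    using rat_fun_shift_aut[OF is_subfield_k transcendental_root] periods_subset shift_fixes_kt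
    by (auto simp: field_auts_fixing_def)
next
  show "field_auts_fixing kr kt \<subseteq> shift ` periods"
  proof
    fix \<sigma> assume \<sigma>: "\<sigma> \<in> field_auts_fixing kr kt"
    have hom: "field_hom_on kr \<sigma>"
      using \<sigma> field_auts_fixing_hom subfield_1[OF is_subfield_gen_field] by blast
    have fix_kt: "\<forall>x\<in>kt. \<sigma> x = x"
      using \<sigma> by (simp add: field_auts_fixing_def)
    then have fix_k: "\<forall>c\<in>k. \<sigma> c = c"
      using gen_field_superset by blast
    have "poly F (\<sigma> r) = \<sigma> t"
      using field_hom_on_poly[OF is_subfield_kr subset_rat_fun_field[OF is_subfield_k] hom fix_k
          poly_over_F generator_mem_rat_fun_field[OF is_subfield_k]] root by simp
    also have "\<sigma> t = t"
      using fix_kt gen_field_superset by blast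
    finally have d: "\<sigma> r - r \<in> periods"
      using root_iff_mem_periods by blast
    then have dk: "\<sigma> r - r \<in> k"
      using periods_subset by blast
    note shift_aut = rat_fun_shift_aut[OF is_subfield_k transcendental_root dk]
    have "\<sigma> x = shift (\<sigma> r - r) x" if "x \<in> kr" for x
      using rat_fun_field_hom_eqI[OF is_subfield_k transcendental_root hom
          field_auts_fixing_hom[OF shift_aut subfield_1[OF is_subfield_k]] _ _ that]
        fix_k shift_aut rat_fun_shift_generator[OF is_subfield_k transcendental_root dk]
      by (simp add: field_auts_fixing_def)
    then have "\<sigma> = shift (\<sigma> r - r)"
      using \<sigma> shift_aut by (intro extensionalityI[where A = kr]) (auto simp: field_auts_fixing_def)
    then show "\<sigma> \<in> shift ` periods"
      using d by blast
  qed
qed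

lemma inj_on_shift: "inj_on shift periods"
  by (rule inj_onI)
    (metis add_left_cancel periods_subset rat_fun_shift_generator[OF is_subfield_k transcendental_root] subsetD)

lemma shift_add:
  assumes "d \<in> periods" "e \<in> periods"
  shows "shift (d + e) = compose kr (shift d) (shift e)"
proof (rule extensionalityI[where A = kr])
  show "shift (d + e) \<in> extensional kr"
    by (simp add: rat_fun_shift_def rat_fun_subst_def)
  show "compose kr (shift d) (shift e) \<in> extensional kr"
    by (simp add: compose_def)
  have "d \<in> k" "e \<in> k"
    using assms periods_subset by blast+
  then show "shift (d + e) x = compose kr (shift d) (shift e) x" if "x \<in> kr" for x
    using rat_fun_shift_add[OF is_subfield_k transcendental_root _ _ that] that
    by (simp add: compose_def)
qed

lemma L_surj: "c \<in> k \<Longrightarrow> \<exists>x\<in>k. L x = c"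
proof -
  assume c: "c \<in> k"
  have "poly_over k [:-c, a1, a2:]"
    using c coeffs is_subfield_k by (simp add: poly_over_pCons poly_over_0 subfield_uminus)
  moreover have "degree [:-c, a1, a2:] = 2"
    using a2_nonzero by simp
  ultimately obtain x where "x \<in> k" "poly [:-c, a1, a2:] x = 0"
    using alg_closed unfolding alg_closed_subfield_def by fastforce
  moreover have "poly [:-c, a1, a2:] x = L x - c"
    by (simp add: L_def algebra_simps)
  ultimately show ?thesis
    by auto
qed

primrec chain :: "nat \<Rightarrow> 'b" where
  "chain 0 = a1 / a2"
| "chain (Suc j) = (SOME x. x \<in> k \<and> L x = chain j)"

lemma chain_Suc:
  assumes "chain j \<in> k"
  shows "chain (Suc j) \<in> k \<and> L (chain (Suc j)) = chain j"
proof -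
  have "\<exists>x. x \<in> k \<and> L x = chain j"
    using L_surj[OF assms] by blast
  then show ?thesis
    unfolding chain.simps by (rule someI_ex)
qed

lemma chain_mem: "chain j \<in> k"
proof (induct j)
  case 0
  then show ?case
    using coeffs subfield_divide[OF is_subfield_k] by simp
next
  case (Suc j)
  then show ?case
    using chain_Suc by blast
qed

lemma L_chain_Suc: "L (chain (Suc j)) = chain j"
  using chain_Suc chain_mem by blast

lemma L_chain_0: "L (chain 0) = 0"
proof -
  have "L (chain 0) = a1 / a2 * (a1 + a1)"
    using a2_nonzero by (simp add: L_def algebra_simps)
  then show ?thesis
    using char2_add_self[OF char] by simp
qed

lemma chain_0_nonzero: "chain 0 \<noteq> 0"
  using a1_nonzero a2_nonzero by simp

lemma iter_L_chain: "i \<le> j \<Longrightarrow> (L ^^ i) (chain j) = chain (j - i)"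
proof (induct i)
  case (Suc i)
  then have "(L ^^ Suc i) (chain j) = L (chain (Suc (j - Suc i)))"
    by (simp add: Suc_diff_Suc)
  then show ?case
    using L_chain_Suc by simp
qed simp

lemma iter_L_chain_eq_0: "j < m \<Longrightarrow> (L ^^ m) (chain j) = 0"
proof -
  assume "j < m"
  then have "(L ^^ m) (chain j) = (L ^^ (m - Suc j)) ((L ^^ Suc j) (chain j))"
    by (metis Suc_leI funpow_add le_add_diff_inverse2 o_apply)
  also have "(L ^^ Suc j) (chain j) = 0"
    using iter_L_chain[of j j] L_chain_0 by simp
  finally show ?thesis
    using iter_L_0 by simp
qed

text \<open>Applying L^(max S) kills every term of the sum but the top one, which becomes c_0.\<close>

lemma sum_chain_nonzero: "finite S \<Longrightarrow> S \<noteq> {} \<Longrightarrow> (\<Sum>j\<in>S. chain j) \<noteq> 0"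
proof
  assume S: "finite S" "S \<noteq> {}" and z: "(\<Sum>j\<in>S. chain j) = 0"
  define m where "m = Max S"
  have "(L ^^ m) (\<Sum>j\<in>S. chain j) = (\<Sum>j\<in>S. if j = m then chain 0 else 0)"
    unfolding iter_L_sum[OF S(1)]
  proof (rule sum.cong[OF refl])
    fix j assume "j \<in> S"
    then have "j \<le> m"
      using S m_def by simp
    then show "(L ^^ m) (chain j) = (if j = m then chain 0 else 0)"
      using iter_L_chain[of m m] iter_L_chain_eq_0[of j m] by auto
  qed
  also have "\<dots> = chain 0"
    using S m_def by simp
  finally show False
    using z iter_L_0 chain_0_nonzero by simp
qed

lemma chain_mem_periods: "j < n \<Longrightarrow> chain j \<in> periods"
  by (simp add: periods_def iter_L_chain_eq_0)

definition chain_comb :: "(nat \<Rightarrow> int) \<Rightarrow> 'b" where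
  "chain_comb e = (\<Sum>j<n. of_int (e j) * chain j)"

lemma chain_comb_eq_sum:
  assumes "e \<in> carrier (C2_power n)"
  shows "chain_comb e = (\<Sum>j\<in>{j\<in>{..<n}. e j = 1}. chain j)"
proof -
  have "of_int (e j) * chain j = (if e j = 1 then chain j else 0)" if "j \<in> {..<n}" for j
    using C2_power_mem[OF assms, of j] that by auto
  then have "chain_comb e = (\<Sum>j<n. if e j = 1 then chain j else 0)"
    unfolding chain_comb_def by (rule sum.cong[OF refl])
  also have "\<dots> = (\<Sum>j\<in>{j\<in>{..<n}. e j = 1}. chain j)"
    by (rule sum.inter_filter[symmetric]) simp
  finally show ?thesis .
qed

lemma chain_comb_mem_periods:
  assumes "e \<in> carrier (C2_power n)"
  shows "chain_comb e \<in> periods"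
  unfolding chain_comb_eq_sum[OF assms] by (rule periods_sum) (simp_all add: chain_mem_periods)

lemma chain_comb_mult:
  assumes "e \<in> carrier (C2_power n)" "e' \<in> carrier (C2_power n)"
  shows "chain_comb (e \<otimes>\<^bsub>C2_power n\<^esub> e') = chain_comb e + chain_comb e'"
  unfolding chain_comb_def
  by (simp add: C2_power_mult char2_of_int_mod2[OF char] distrib_right sum.distrib)

lemma chain_comb_inj: "inj_on chain_comb (carrier (C2_power n))"
proof (rule inj_onI)
  fix e e' assume e: "e \<in> carrier (C2_power n)" "e' \<in> carrier (C2_power n)"
    and eq: "chain_comb e = chain_comb e'"
  let ?h = "e \<otimes>\<^bsub>C2_power n\<^esub> e'"
  have h: "?h \<in> carrier (C2_power n)"
    using e group_C2_power by (simp add: monoid.m_closed group.is_monoid)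
  have "chain_comb ?h = 0"
    using chain_comb_mult[OF e] eq char2_add_self[OF char] by simp
  then have "(\<Sum>j\<in>{j\<in>{..<n}. ?h j = 1}. chain j) = 0"
    using chain_comb_eq_sum[OF h] by simp
  then have "{j\<in>{..<n}. ?h j = 1} = {}"
    using sum_chain_nonzero[of "{j\<in>{..<n}. ?h j = 1}"] by auto
  then have "?h j = 0" if "j < n" for j
    using C2_power_mem[OF h that] that by blast
  then show "e = e'"
    by (rule C2_power_eqI[OF e])
qed

lemma chain_comb_image: "chain_comb ` carrier (C2_power n) = periods"
proof (rule card_seteq[OF finite_periods])
  show "chain_comb ` carrier (C2_power n) \<subseteq> periods"
    using chain_comb_mem_periods by blast
  have "card (chain_comb ` carrier (C2_power n)) = 2 ^ n"
    using card_image[OF chain_comb_inj] by (simp add: carrier_C2_power card_PiE)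
  then show "card periods \<le> card (chain_comb ` carrier (C2_power n))"
    using card_periods_le by simp
qed

lemma C2_power_iso_Gal_group: "(shift \<circ> chain_comb) \<in> iso (C2_power n) (Gal_group kr kt)"
proof (rule isoI)
  show "shift \<circ> chain_comb \<in> hom (C2_power n) (Gal_group kr kt)"
    using Gal_carrier_eq chain_comb_mem_periods shift_add chain_comb_mult
    by (intro homI) (auto simp: Gal_group_def)
  have "bij_betw chain_comb (carrier (C2_power n)) periods"
    using chain_comb_inj chain_comb_image by (simp add: bij_betw_def)
  moreover have "bij_betw shift periods (carrier (Gal_group kr kt))"
    using inj_on_shift Gal_carrier_eq by (simp add: bij_betw_def Gal_group_def)
  ultimately show "bij_betw (shift \<circ> chain_comb) (carrier (C2_power n)) (carrier (Gal_group kr kt))"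
    by (rule bij_betw_trans)
qed

end

theorem theorem5p5:
  fixes k :: "'b::field set" and t a0 a1 a2 :: 'b and n :: nat
  assumes "CHAR('b) = 2"
    and "alg_closed_subfield k"
    and "transcendental_over k t"
    and "a0 \<in> k" "a1 \<in> k" "a2 \<in> k" "a2 * a1 \<noteq> 0"
    and "splits (poly_iter [:a0, a1, a2:] n - [:t:])"
  shows "Gal_group (splitting_field (gen_field (insert t k)) (poly_iter [:a0, a1, a2:] n - [:t:]))
                   (gen_field (insert t k))
         \<cong> C2_power n"
proof -
  have "degree (poly_iter [:a0, a1, a2:] n) = 2 ^ n"
    using assms(7) by (simp add: degree_poly_iter numeral_2_eq_2)
  then have "degree (poly_iter [:a0, a1, a2:] n - [:t:]) = 2 ^ n"
    using degree_add_eq_left[of "[:-t:]" "poly_iter [:a0, a1, a2:] n"]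
    by (simp add: diff_conv_add_uminus)
  then obtain r where "poly (poly_iter [:a0, a1, a2:] n - [:t:]) r = 0"
    using splits_has_root[OF assms(8)] by fastforce
  then interpret char2_iterated_quadratic k t a0 a1 a2 n r
    using assms by unfold_locales simp_all
  show ?thesis
    using C2_power_iso_Gal_group splitting_field_eq group.iso_sym[OF group_C2_power]
    by (auto simp: is_iso_def)
qed

end
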